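(* Let $\rho_A,\rho_B,\rho_O,\rho_T>0$, $\boldsymbol\alpha\in\mathbb R^c$, $\boldsymbol v_1\in\mathbb R^d$, $\mathcal Z=\{\boldsymbol z_x\}_{x\in[c]}\in(\mathbb R^d)^c$, and $\boldsymbol z'_x=\rho_A\boldsymbol z_x+\frac{\rho_B}{d_x}\sum_{y\in[c]}w_{x,y}\boldsymbol z_y+\rho_O\sum_{y\in[c]}\alpha_y\boldsymbol z_y+\rho_T\boldsymbol v_1$; let $\boldsymbol Z,\boldsymbol Z'\in\mathbb R^{d\times c}$ have columns $\boldsymbol z_x$, $\boldsymbol z'_x$. Let $\boldsymbol M=\rho_A\boldsymbol I+\rho_B\boldsymbol D^{-1/2}\boldsymbol W\boldsymbol D^{-1/2}$ with eigenvalues $\lambda_1,\dots,\lambda_c$ in non-increasing order of absolute value and orthonormal eigen-decomposition $\boldsymbol M=[\boldsymbol f\ \boldsymbol X\ \boldsymbol Y]\,\mathrm{diag}(\lambda_1,\boldsymbol\Lambda,\boldsymbol\Lambda')\,[\boldsymbol f\ \boldsymbol X\ \boldsymbol Y]^\top$, where $\boldsymbol X$ holds eigenvectors for $\lambda_2,\dots,\lambda_q$ and $\boldsymbol Y$ for $\lambda_{q+1},\dots,\lambda_c$ ($2\le q<c$); let $\delta_{\boldsymbol M}=|\lambda_q/\lambda_{q+1}|$. Let $\sigma:\mathbb R^d\to\mathbb R^d$ be a great mapping w.r.t. $(\gamma_1,\gamma_2,\{\boldsymbol Z'\},\boldsymbol X)$ and w.r.t. $(\gamma_1',\gamma_2',\{\boldsymbol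 Z'\},\boldsymbol Y)$. Then, provided $\lambda_{q+1}\ne0$, $\|\boldsymbol Z\boldsymbol D^{1/2}\boldsymbol X\|\ne0$ and $\|\boldsymbol Z\boldsymbol D^{1/2}\boldsymbol Y\|\ne0$, $$\frac{\|\sigma(\boldsymbol Z')\boldsymbol D^{1/2}\boldsymbol X\|}{\|\boldsymbol Z\boldsymbol D^{1/2}\boldsymbol X\|}\ge\delta_{\boldsymbol M}\frac{\gamma_1}{\gamma_2'}\,\frac{\|\sigma(\boldsymbol Z')\boldsymbol D^{1/2}\boldsymbol Y\|}{\|\boldsymbol Z\boldsymbol D^{1/2}\boldsymbol Y\|}.$$
   Context: $\mathcal G$ is a connected undirected graph on $[c]$ with (0/1) adjacency matrix $\widetilde{\boldsymbol W}$ and stationary distribution $\boldsymbol\pi$ of its random walk (all $\pi_x>0$). $\boldsymbol W=\{w_{x,y}\}$ with $w_{x,y}=\widetilde w_{x,y}\pi_x\pi_y$, $d_x=\sum_yw_{x,y}$, $\boldsymbol D=\mathrm{diag}(d_1,\dots,d_c)$. $\|\cdot\|$ is the Frobenius norm. For $\sigma:\mathbb R^d\to\mathbb R^d$ and $\boldsymbol Z\in\mathbb R^{d\times c}$, $\sigma(\boldsymbol Z)$ means $\sigma$ applied to each column. Great mapping: for a set $\mathscr Z\subseteq\mathbb R^{d\times c}$, a matrix $\boldsymbol U\in\mathbb R^{c\times p}$ with orthonormal columns, and scalars $\gamma_1,\gamma_2>0$, a function $\sigma:\mathbb R^d\to\mathbb R^d$ is a great mapping w.r.t. $(\gamma_1,\gamma_2,\mathscr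 Z,\boldsymbol U)$ if for all $\boldsymbol Z\in\mathscr Z$, $\gamma_1\|\boldsymbol Z\boldsymbol D^{1/2}\boldsymbol U\|\le\|\sigma(\boldsymbol Z)\boldsymbol D^{1/2}\boldsymbol U\|\le\gamma_2\|\boldsymbol Z\boldsymbol D^{1/2}\boldsymbol U\|$. *)

theory Defs
  imports "HOL-Analysis.Analysis"
begin

text \<open>Vertices of the graph are the elements of a finite type 'c (so c = CARD('c)).  A d x c matrix Z is given by its columns
  Z :: 'c => real^'d.  A c x p matrix U with columns indexed by a finite set J of naturals
  is given as U :: 'c => nat => real (entry (x,j)).\<close>

definition graph_degree :: "('c::finite \<Rightarrow> 'c \<Rightarrow> real) \<Rightarrow> 'c \<Rightarrow> real" where
  "graph_degree A x = (\<Sum>y\<in>UNIV. A x y)"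

definition adjacency_01_sym :: "('c::finite \<Rightarrow> 'c \<Rightarrow> real) \<Rightarrow> bool" where
  "adjacency_01_sym A \<longleftrightarrow> (\<forall>x y. A x y = 0 \<or> A x y = 1) \<and> (\<forall>x y. A x y = A y x)"

definition graph_connected :: "('c::finite \<Rightarrow> 'c \<Rightarrow> real) \<Rightarrow> bool" where
  "graph_connected A \<longleftrightarrow> (\<forall>x y. (\<lambda>u v. A u v = 1)\<^sup>*\<^sup>* x y)"

definition stationary_dist :: "('c::finite \<Rightarrow> 'c \<Rightarrow> real) \<Rightarrow> ('c \<Rightarrow> real) \<Rightarrow> bool" where
  "stationary_dist A \<pi> \<longleftrightarrow> (\<forall>x. \<pi> x > 0) \<and> (\<Sum>x\<in>UNIV. \<pi> x) = 1 \<and>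
     (\<forall>y. (\<Sum>x\<in>UNIV. \<pi> x * (A x y / graph_degree A x)) = \<pi> y)"

definition weight :: "('c::finite \<Rightarrow> 'c \<Rightarrow> real) \<Rightarrow> ('c \<Rightarrow> real) \<Rightarrow> 'c \<Rightarrow> 'c \<Rightarrow> real" where
  "weight A \<pi> x y = A x y * \<pi> x * \<pi> y"

definition wdeg :: "('c::finite \<Rightarrow> 'c \<Rightarrow> real) \<Rightarrow> ('c \<Rightarrow> real) \<Rightarrow> 'c \<Rightarrow> real" where
  "wdeg A \<pi> x = (\<Sum>y\<in>UNIV. weight A \<pi> x y)"

text \<open>Column j of the d x p matrix Z D^(1/2) U (dg = the diagonal of D).\<close>
definition ZDU :: "('c::finite \<Rightarrow> real^'d) \<Rightarrow> ('c \<Rightarrow> real) \<Rightarrow> ('c \<Rightarrow> nat \<Rightarrow> real) \<Rightarrow> nat \<Rightarrow> real^'d" where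
  "ZDU Z dg U j = (\<Sum>x\<in>UNIV. (sqrt (dg x) * U x j) *\<^sub>R Z x)"

definition frob :: "nat set \<Rightarrow> (nat \<Rightarrow> real^'d) \<Rightarrow> real" where
  "frob J B = sqrt (\<Sum>j\<in>J. (norm (B j))\<^sup>2)"

definition orthonormal_cols :: "('c::finite \<Rightarrow> nat \<Rightarrow> real) \<Rightarrow> nat set \<Rightarrow> bool" where
  "orthonormal_cols U J \<longleftrightarrow> (\<forall>i\<in>J. \<forall>j\<in>J. (\<Sum>x\<in>UNIV. U x i * U x j) = (if i = j then 1 else 0))"

definition great_mapping ::
  "('c::finite \<Rightarrow> real) \<Rightarrow> real \<Rightarrow> real \<Rightarrow> ('c \<Rightarrow> real^'d) set \<Rightarrow> ('c \<Rightarrow> nat \<Rightarrow> real) \<Rightarrow> nat set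
    \<Rightarrow> (real^'d \<Rightarrow> real^'d) \<Rightarrow> bool" where
  "great_mapping dg \<gamma>1 \<gamma>2 Zs U J \<sigma> \<longleftrightarrow> \<gamma>1 > 0 \<and> \<gamma>2 > 0 \<and> orthonormal_cols U J \<and>
     (\<forall>Z\<in>Zs. \<gamma>1 * frob J (ZDU Z dg U) \<le> frob J (ZDU (\<sigma> \<circ> Z) dg U) \<and>
              frob J (ZDU (\<sigma> \<circ> Z) dg U) \<le> \<gamma>2 * frob J (ZDU Z dg U))"

end

(* With s = D^(1/2) 1, the update Z -> Z' acts on the columns of Z D^(1/2) V through the matrix M,
   up to a multiple of <s, v_j> coming from the column-independent part of Z'.  The vector s is an
   eigenvector of M for rho_A + rho_B, and on a connected graph every eigenvector whose eigenvalue
   has modulus at least rho_A + rho_B is a multiple of s: the quadratic form of D^(-1/2) W D^(-1/2)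
   is bounded by 1 in modulus, with value 1 only on D^(1/2) times a constant.  Hence s is orthogonal
   to all non-leading eigenvectors, so Z' D^(1/2) v_j = lambda_j Z D^(1/2) v_j for j >= 2; the ordering
   of the eigenvalues and the two great-mapping inequalities then give the bound. *)

theory Submission
  imports Defs
begin

lemma eigenvector_of_spectral_decomposition:
  fixes M :: "'c::finite \<Rightarrow> 'c \<Rightarrow> real" and V :: "'c \<Rightarrow> nat \<Rightarrow> real"
  assumes "finite I" and "orthonormal_cols V I"
    and "\<And>x y. M x y = (\<Sum>i\<in>I. V x i * lam i * V y i)" and "j \<in> I"
  shows "(\<Sum>y\<in>UNIV. M x y * V y j) = lam j * V x j"
proof -
  have "(\<Sum>y\<in>UNIV. M x y * V y j) = (\<Sum>i\<in>I. V x i * lam i * (\<Sum>y\<in>UNIV. V y i * V y j))"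
    by (simp add: assms(3) sum_distrib_left sum_distrib_right mult.assoc sum.swap[of _ UNIV])
  also have "\<dots> = (\<Sum>i\<in>I. if i = j then V x i * lam i else 0)"
    using assms(2,4) unfolding orthonormal_cols_def by (intro sum.cong) auto
  also have "\<dots> = lam j * V x j"
    using assms(1,4) by simp
  finally show ?thesis .
qed

lemma eigenvalue_eq_if_not_orthogonal:
  fixes M :: "'c::finite \<Rightarrow> 'c \<Rightarrow> real"
  assumes sym: "\<And>x y. M x y = M y x"
    and "\<And>x. (\<Sum>y\<in>UNIV. M x y * u y) = a * u x" and "\<And>x. (\<Sum>y\<in>UNIV. M x y * v y) = b * v x"
    and "(\<Sum>x\<in>UNIV. u x * v x) \<noteq> 0"
  shows "a = b"
proof -
  have "a * (\<Sum>x\<in>UNIV. u x * v x) = (\<Sum>x\<in>UNIV. (\<Sum>y\<in>UNIV. M x y * u y) * v x)"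
    by (simp only: assms(2)) (simp add: sum_distrib_left mult_ac)
  also have "\<dots> = (\<Sum>x\<in>UNIV. \<Sum>y\<in>UNIV. M x y * u y * v x)"
    by (simp add: sum_distrib_right)
  also have "\<dots> = (\<Sum>y\<in>UNIV. u y * (\<Sum>x\<in>UNIV. M y x * v x))"
    by (subst sum.swap) (simp add: sum_distrib_left sym mult_ac)
  also have "\<dots> = b * (\<Sum>x\<in>UNIV. u x * v x)"
    by (simp only: assms(3)) (simp add: sum_distrib_left mult_ac)
  finally show ?thesis
    using assms(4) by simp
qed

lemma frob_nonneg: "0 \<le> frob J B"
  unfolding frob_def by (simp add: sum_nonneg)

lemma mult_frob_eq:
  assumes "0 \<le> c"
  shows "c * frob J B = sqrt (\<Sum>j\<in>J. (c * norm (B j))\<^sup>2)"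
proof -
  have "sqrt (\<Sum>j\<in>J. (c * norm (B j))\<^sup>2) = sqrt (c\<^sup>2 * (\<Sum>j\<in>J. (norm (B j))\<^sup>2))"
    by (simp add: power_mult_distrib sum_distrib_left)
  then show ?thesis
    using assms by (simp add: frob_def real_sqrt_mult)
qed

lemma mult_frob_le_frob:
  assumes "0 \<le> c" and "\<And>j. j \<in> J \<Longrightarrow> c * norm (B j) \<le> norm (B' j)"
  shows "c * frob J B \<le> frob J B'"
  unfolding mult_frob_eq[OF assms(1)] unfolding frob_def
  using assms by (intro real_sqrt_le_mono sum_mono power_mono) auto

lemma frob_le_mult_frob:
  assumes "0 \<le> c" and "\<And>j. j \<in> J \<Longrightarrow> norm (B' j) \<le> c * norm (B j)"
  shows "frob J B' \<le> c * frob J B"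
  unfolding mult_frob_eq[OF assms(1)] unfolding frob_def
  using assms by (intro real_sqrt_le_mono sum_mono power_mono) auto

definition propagation_matrix :: "real \<Rightarrow> real \<Rightarrow> ('c::finite \<Rightarrow> 'c \<Rightarrow> real) \<Rightarrow> 'c \<Rightarrow> 'c \<Rightarrow> real" where
  "propagation_matrix a b w x y = a * (if x = y then 1 else 0)
     + b * w x y / (sqrt (graph_degree w x) * sqrt (graph_degree w y))"

locale connected_weighted_graph =
  fixes w :: "'c::finite \<Rightarrow> 'c \<Rightarrow> real"
  assumes weight_sym: "w x y = w y x"
    and weight_nonneg: "0 \<le> w x y"
    and connected: "(\<lambda>u v. 0 < w u v)\<^sup>*\<^sup>* x y"
    and nontrivial: "1 < CARD('c)"
begin

abbreviation deg :: "'c \<Rightarrow> real" where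
  "deg \<equiv> graph_degree w"

lemma deg_pos: "0 < deg x"
proof -
  have "UNIV \<noteq> {x}"
    using nontrivial card_1_singleton_iff[of "UNIV :: 'c set"] by auto
  then obtain y where "y \<noteq> x"
    by blast
  moreover have "x = y \<or> (\<exists>z. 0 < w x z)"
    using connected[of x y] by (cases rule: converse_rtranclpE) auto
  ultimately obtain z where "0 < w x z"
    by blast
  then show ?thesis
    unfolding graph_degree_def by (intro sum_pos2[of UNIV z]) (simp_all add: weight_nonneg)
qed

lemma sum_weighted_square:
  "(\<Sum>x\<in>UNIV. \<Sum>y\<in>UNIV. w x y * (g x + c * g y)\<^sup>2)
     = (1 + c\<^sup>2) * (\<Sum>x\<in>UNIV. deg x * (g x)\<^sup>2) + 2 * c * (\<Sum>x\<in>UNIV. \<Sum>y\<in>UNIV. w x y * g x * g y)"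
proof -
  have swap: "(\<Sum>x\<in>UNIV. \<Sum>y\<in>UNIV. w x y * (g y)\<^sup>2) = (\<Sum>x\<in>UNIV. deg x * (g x)\<^sup>2)"
    by (subst sum.swap) (simp add: graph_degree_def sum_distrib_right weight_sym)
  have "(\<Sum>x\<in>UNIV. \<Sum>y\<in>UNIV. w x y * (g x + c * g y)\<^sup>2)
      = (\<Sum>x\<in>UNIV. \<Sum>y\<in>UNIV. w x y * (g x)\<^sup>2) + c\<^sup>2 * (\<Sum>x\<in>UNIV. \<Sum>y\<in>UNIV. w x y * (g y)\<^sup>2)
        + 2 * c * (\<Sum>x\<in>UNIV. \<Sum>y\<in>UNIV. w x y * g x * g y)"
    by (simp add: power2_sum power_mult_distrib algebra_simps sum.distrib sum_distrib_left)
  then show ?thesis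
    by (simp add: swap graph_degree_def sum_distrib_right algebra_simps)
qed

lemma abs_weighted_form_le:
  "\<bar>\<Sum>x\<in>UNIV. \<Sum>y\<in>UNIV. w x y * g x * g y\<bar> \<le> (\<Sum>x\<in>UNIV. deg x * (g x)\<^sup>2)"
proof -
  have "0 \<le> (\<Sum>x\<in>UNIV. \<Sum>y\<in>UNIV. w x y * (g x + c * g y)\<^sup>2)" for c
    by (intro sum_nonneg) (simp add: weight_nonneg)
  from this[of 1] this[of "-1"] show ?thesis
    unfolding sum_weighted_square by simp
qed

lemma constant_if_weighted_form_eq:
  assumes "(\<Sum>x\<in>UNIV. \<Sum>y\<in>UNIV. w x y * g x * g y) = (\<Sum>x\<in>UNIV. deg x * (g x)\<^sup>2)"
  shows "g x = g y"
proof -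
  have "(\<Sum>x\<in>UNIV. \<Sum>y\<in>UNIV. w x y * (g x - g y)\<^sup>2) = 0"
    using sum_weighted_square[of g "-1"] assms by simp
  then have edge_term: "w u v * (g u - g v)\<^sup>2 = 0" for u v
    by (simp add: sum_nonneg_eq_0_iff sum_nonneg weight_nonneg)
  have edge: "g u = g v" if "0 < w u v" for u v
    using edge_term[of u v] that by simp
  show ?thesis
    using connected[of x y] by (induction rule: rtranclp_induct) (auto dest: edge)
qed

lemma propagation_matrix_sym: "propagation_matrix a b w x y = propagation_matrix a b w y x"
  unfolding propagation_matrix_def by (simp add: weight_sym mult.commute)

lemma sqrt_deg_eigenvector:
  "(\<Sum>y\<in>UNIV. propagation_matrix a b w x y * sqrt (deg y)) = (a + b) * sqrt (deg x)"
proof -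
  have "propagation_matrix a b w x y * sqrt (deg y)
      = (if x = y then a * sqrt (deg x) else 0) + b / sqrt (deg x) * w x y" for y
    using deg_pos[of x] deg_pos[of y] by (simp add: propagation_matrix_def field_simps)
  then have "(\<Sum>y\<in>UNIV. propagation_matrix a b w x y * sqrt (deg y))
      = (\<Sum>y\<in>UNIV. (if x = y then a * sqrt (deg x) else 0) + b / sqrt (deg x) * w x y)"
    by simp
  also have "\<dots> = a * sqrt (deg x) + b / sqrt (deg x) * deg x"
    by (simp add: sum.distrib graph_degree_def sum_distrib_left)
  also have "\<dots> = (a + b) * sqrt (deg x)"
    using deg_pos[of x] real_sqrt_mult_self[of "deg x"] by (simp add: field_simps)
  finally show ?thesis .
qed

lemma propagation_matrix_quadratic_form:
  "(\<Sum>x\<in>UNIV. u x * (\<Sum>y\<in>UNIV. propagation_matrix a b w x y * u y))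
     = a * (\<Sum>x\<in>UNIV. (u x)\<^sup>2)
       + b * (\<Sum>x\<in>UNIV. \<Sum>y\<in>UNIV. w x y * (u x / sqrt (deg x)) * (u y / sqrt (deg y)))"
proof -
  have "(\<Sum>x\<in>UNIV. u x * (\<Sum>y\<in>UNIV. propagation_matrix a b w x y * u y))
      = (\<Sum>x\<in>UNIV. \<Sum>y\<in>UNIV. (if x = y then a * (u x)\<^sup>2 else 0)
           + b * (w x y * (u x / sqrt (deg x)) * (u y / sqrt (deg y))))"
    unfolding sum_distrib_left
    by (intro sum.cong refl) (simp add: propagation_matrix_def power2_eq_square algebra_simps)
  then show ?thesis
    by (simp add: sum.distrib sum_distrib_left)
qed

(* Without 0 < a this fails on bipartite graphs, where -b is an eigenvalue. *)
lemma eigenvector_multiple_sqrt_deg: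
  assumes "0 < a" and "0 < b"
    and eigen: "\<And>x. (\<Sum>y\<in>UNIV. propagation_matrix a b w x y * u y) = \<mu> * u x"
    and large: "a + b \<le> \<bar>\<mu>\<bar>"
  obtains \<beta> where "\<And>x. u x = \<beta> * sqrt (deg x)"
proof -
  define g where "g x = u x / sqrt (deg x)" for x
  have u_eq: "u x = g x * sqrt (deg x)" for x
    using deg_pos[of x] by (simp add: g_def)
  define N where "N = (\<Sum>x\<in>UNIV. (u x)\<^sup>2)"
  define Q where "Q = (\<Sum>x\<in>UNIV. \<Sum>y\<in>UNIV. w x y * g x * g y)"
  have N_eq: "N = (\<Sum>x\<in>UNIV. deg x * (g x)\<^sup>2)"
    unfolding N_def by (simp add: u_eq power_mult_distrib less_imp_le[OF deg_pos] mult.commute)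
  have "\<mu> * N = (\<Sum>x\<in>UNIV. u x * (\<Sum>y\<in>UNIV. propagation_matrix a b w x y * u y))"
    by (simp only: eigen) (simp add: N_def sum_distrib_left power2_eq_square mult_ac)
  then have rayleigh: "\<mu> * N = a * N + b * Q"
    unfolding propagation_matrix_quadratic_form by (simp add: N_def Q_def g_def mult.assoc)
  have Q_bounds: "\<bar>Q\<bar> \<le> N"
    unfolding Q_def N_eq by (rule abs_weighted_form_le)
  have bQ: "b * Q \<le> b * N" "- (b * N) \<le> b * Q"
    using mult_left_mono[of Q N b] mult_left_mono[of "- N" Q b] Q_bounds \<open>0 < b\<close> by auto
  have "N = 0 \<or> Q = N"
  proof (cases "0 \<le> \<mu>")
    case True
    then have "(a + b) * N \<le> \<mu> * N"
      using large Q_bounds by (intro mult_right_mono) auto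
    then show ?thesis
      using rayleigh Q_bounds \<open>0 < b\<close> by (auto simp: algebra_simps)
  next
    case False
    then have "(a + b) * N \<le> - \<mu> * N"
      using large Q_bounds by (intro mult_right_mono) auto
    then have "2 * a * N \<le> 0"
      using rayleigh bQ by (simp add: algebra_simps)
    then show ?thesis
      using \<open>0 < a\<close> Q_bounds by (simp add: mult_le_0_iff order_antisym)
  qed
  then show ?thesis
  proof
    assume "N = 0"
    then have "u x = 0" for x
      by (simp add: N_def sum_nonneg_eq_0_iff)
    then show ?thesis
      using that[of 0] by simp
  next
    assume "Q = N"
    then have "g x = g y" for x y
      using constant_if_weighted_form_eq by (simp add: Q_def N_eq)
    then show ?thesis
      using that[of "g undefined"] u_eq by metis
  qed
qed

lemma sqrt_deg_orthogonal_eigenvector: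
  assumes "0 < a" and "0 < b" and orth: "orthonormal_cols V I" and "i \<in> I" "j \<in> I" "i \<noteq> j"
    and eigen: "\<And>k x. k \<in> {i, j} \<Longrightarrow> (\<Sum>y\<in>UNIV. propagation_matrix a b w x y * V y k) = lam k * V x k"
    and dominated: "\<bar>lam j\<bar> \<le> \<bar>lam i\<bar>"
  shows "(\<Sum>x\<in>UNIV. sqrt (deg x) * V x j) = 0"
proof (rule ccontr)
  assume "(\<Sum>x\<in>UNIV. sqrt (deg x) * V x j) \<noteq> 0"
  have eigen_i: "\<And>x. (\<Sum>y\<in>UNIV. propagation_matrix a b w x y * V y i) = lam i * V x i"
    and eigen_j: "\<And>x. (\<Sum>y\<in>UNIV. propagation_matrix a b w x y * V y j) = lam j * V x j"
    using eigen by simp_all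
  have "a + b = lam j"
    by (rule eigenvalue_eq_if_not_orthogonal[OF propagation_matrix_sym sqrt_deg_eigenvector eigen_j]) fact
  then have large: "a + b \<le> \<bar>lam i\<bar>" "a + b \<le> \<bar>lam j\<bar>"
    using dominated by auto
  obtain \<beta>i where \<beta>i: "\<And>x. V x i = \<beta>i * sqrt (deg x)"
    using eigenvector_multiple_sqrt_deg[OF \<open>0 < a\<close> \<open>0 < b\<close> eigen_i large(1)] by blast
  obtain \<beta>j where \<beta>j: "\<And>x. V x j = \<beta>j * sqrt (deg x)"
    using eigenvector_multiple_sqrt_deg[OF \<open>0 < a\<close> \<open>0 < b\<close> eigen_j large(2)] by blast
  define S where "S = (\<Sum>x\<in>UNIV. deg x)"
  have inner: "(\<Sum>x\<in>UNIV. (c * sqrt (deg x)) * (c' * sqrt (deg x))) = c * c' * S" for c c'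
  proof -
    have termwise: "(c * sqrt (deg x)) * (c' * sqrt (deg x)) = c * c' * deg x" for x
      using deg_pos[of x] real_sqrt_mult_self[of "deg x"] by (simp add: mult_ac)
    show ?thesis
      unfolding S_def sum_distrib_left by (rule sum.cong[OF refl termwise])
  qed
  have "\<beta>i * \<beta>i * S = 1" "\<beta>j * \<beta>j * S = 1" "\<beta>i * \<beta>j * S = 0"
    using orth \<open>i \<in> I\<close> \<open>j \<in> I\<close> \<open>i \<noteq> j\<close>
    unfolding orthonormal_cols_def inner[symmetric] \<beta>i[symmetric] \<beta>j[symmetric] by auto
  moreover have "(\<beta>i * \<beta>i * S) * (\<beta>j * \<beta>j * S) = (\<beta>i * \<beta>j * S) * (\<beta>i * \<beta>j * S)"
    by (simp add: mult_ac)
  ultimately show False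
    by (metis mult_1 mult_zero_left zero_neq_one)
qed

lemma ZDU_propagation:
  assumes Z': "\<And>x. Z' x = a *\<^sub>R Z x + (b / deg x) *\<^sub>R (\<Sum>y\<in>UNIV. w x y *\<^sub>R Z y) + K"
    and eigen: "\<And>x. (\<Sum>y\<in>UNIV. propagation_matrix a b w x y * V y j) = \<mu> * V x j"
  shows "ZDU Z' deg V j = \<mu> *\<^sub>R ZDU Z deg V j + (\<Sum>x\<in>UNIV. sqrt (deg x) * V x j) *\<^sub>R K"
proof -
  define c where "c x y = sqrt (deg x) * V x j * (b / deg x) * w x y" for x y
  have entry: "sqrt (deg y) * propagation_matrix a b w y x * V x j
      = (if y = x then sqrt (deg y) * V y j * a else 0) + c x y" for x y
    using deg_pos[of x] deg_pos[of y] real_sqrt_mult_self[of "deg x"]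
    by (simp add: c_def propagation_matrix_def field_simps weight_sym)
  have coeff: "sqrt (deg y) * V y j * a + (\<Sum>x\<in>UNIV. c x y) = \<mu> * (sqrt (deg y) * V y j)" for y
  proof -
    have "sqrt (deg y) * V y j * a + (\<Sum>x\<in>UNIV. c x y)
        = sqrt (deg y) * (\<Sum>x\<in>UNIV. propagation_matrix a b w y x * V x j)"
      by (simp add: sum_distrib_left mult.assoc[symmetric] entry sum.distrib)
    also have "\<dots> = \<mu> * (sqrt (deg y) * V y j)"
      by (simp add: eigen mult.left_commute)
    finally show ?thesis .
  qed
  have "ZDU Z' deg V j = (\<Sum>x\<in>UNIV. (sqrt (deg x) * V x j * a) *\<^sub>R Z x)
      + (\<Sum>x\<in>UNIV. \<Sum>y\<in>UNIV. c x y *\<^sub>R Z y) + (\<Sum>x\<in>UNIV. sqrt (deg x) * V x j) *\<^sub>R K"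
    by (simp add: ZDU_def Z' c_def scaleR_add_right sum.distrib scaleR_sum_right scaleR_sum_left mult.assoc)
  also have "(\<Sum>x\<in>UNIV. \<Sum>y\<in>UNIV. c x y *\<^sub>R Z y) = (\<Sum>y\<in>UNIV. (\<Sum>x\<in>UNIV. c x y) *\<^sub>R Z y)"
    by (subst sum.swap) (simp add: scaleR_sum_left)
  also have "(\<Sum>x\<in>UNIV. (sqrt (deg x) * V x j * a) *\<^sub>R Z x) + (\<Sum>y\<in>UNIV. (\<Sum>x\<in>UNIV. c x y) *\<^sub>R Z y)
      = (\<Sum>y\<in>UNIV. (\<mu> * (sqrt (deg y) * V y j)) *\<^sub>R Z y)"
    by (simp add: coeff[symmetric] sum.distrib scaleR_add_left)
  also have "\<dots> = \<mu> *\<^sub>R ZDU Z deg V j"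
    by (simp add: ZDU_def scaleR_sum_right)
  finally show ?thesis .
qed

lemma ZDU_propagation_subdominant:
  assumes "0 < a" and "0 < b"
    and Z': "\<And>x. Z' x = a *\<^sub>R Z x + (b / deg x) *\<^sub>R (\<Sum>y\<in>UNIV. w x y *\<^sub>R Z y) + K"
    and "orthonormal_cols V I" and "i \<in> I" "j \<in> I" "i \<noteq> j"
    and eigen: "\<And>k x. k \<in> {i, j} \<Longrightarrow> (\<Sum>y\<in>UNIV. propagation_matrix a b w x y * V y k) = lam k * V x k"
    and "\<bar>lam j\<bar> \<le> \<bar>lam i\<bar>"
  shows "ZDU Z' deg V j = lam j *\<^sub>R ZDU Z deg V j"
proof -
  have "ZDU Z' deg V j = lam j *\<^sub>R ZDU Z deg V j + (\<Sum>x\<in>UNIV. sqrt (deg x) * V x j) *\<^sub>R K"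
    using Z' eigen by (intro ZDU_propagation[where a = a and b = b]) auto
  with sqrt_deg_orthogonal_eigenvector[OF assms(1,2) assms(4-)] show ?thesis
    by simp
qed

end

lemma connected_weighted_graph_weight:
  assumes "adjacency_01_sym A" and "graph_connected A" and "\<And>x. 0 < \<pi> x" and "1 < CARD('c)"
  shows "connected_weighted_graph (weight A (\<pi> :: 'c::finite \<Rightarrow> real))"
proof
  fix x y :: 'c
  have A: "A x y = A y x" "A x y = 0 \<or> A x y = 1"
    using assms(1) unfolding adjacency_01_sym_def by auto
  then show "weight A \<pi> x y = weight A \<pi> y x"
    by (simp add: weight_def mult_ac)
  show "0 \<le> weight A \<pi> x y"
    using A(2) assms(3)[of x] assms(3)[of y] by (auto simp: weight_def)
  have "(\<lambda>u v. A u v = 1) \<le> (\<lambda>u v. 0 < weight A \<pi> u v)"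
    using assms(3) by (auto simp: weight_def)
  then show "(\<lambda>u v. 0 < weight A \<pi> u v)\<^sup>*\<^sup>* x y"
    using assms(2) rtranclp_mono unfolding graph_connected_def by blast
qed (fact assms(4))

lemma wdeg_eq_graph_degree: "wdeg A \<pi> = graph_degree (weight A \<pi>)"
  by (simp add: fun_eq_iff wdeg_def graph_degree_def)

lemma ratio_le_of_bounds:
  fixes a b e f l l' \<gamma> \<gamma>' :: real
  assumes "\<gamma> * (l * b) \<le> a" and "e \<le> \<gamma>' * (l' * f)"
    and "0 < b" "0 < f" "0 < l'" "0 < \<gamma>'" "0 \<le> l" "0 \<le> \<gamma>"
  shows "l / l' * (\<gamma> / \<gamma>') * (e / f) \<le> a / b"
proof -
  have "l / l' * (\<gamma> / \<gamma>') * (e / f) \<le> l / l' * (\<gamma> / \<gamma>') * (\<gamma>' * l')"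
    using assms by (intro mult_left_mono) (simp_all add: pos_divide_le_eq mult_ac)
  also have "\<dots> = \<gamma> * l"
    using assms by simp
  also have "\<dots> \<le> a / b"
    using assms by (simp add: pos_le_divide_eq mult_ac)
  finally show ?thesis .
qed

theorem corollary4:
  fixes A :: "'c::finite \<Rightarrow> 'c \<Rightarrow> real" and \<pi> :: "'c \<Rightarrow> real"
    and \<rho>A \<rho>B \<rho>O \<rho>T :: real and \<alpha> :: "'c \<Rightarrow> real" and v1 :: "real^'d"
    and Z Z' :: "'c \<Rightarrow> real^'d"
    and V :: "'c \<Rightarrow> nat \<Rightarrow> real" and lam :: "nat \<Rightarrow> real" and q :: nat
    and \<sigma> :: "real^'d \<Rightarrow> real^'d" and \<gamma>1 \<gamma>2 \<gamma>1' \<gamma>2' :: real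
  assumes graph: "adjacency_01_sym A" "graph_connected A"
    and stat: "stationary_dist A \<pi>"
    and rho: "\<rho>A > 0" "\<rho>B > 0" "\<rho>O > 0" "\<rho>T > 0"
    and Z'_def: "\<And>x. Z' x = \<rho>A *\<^sub>R Z x
        + (\<rho>B / wdeg A \<pi> x) *\<^sub>R (\<Sum>y\<in>UNIV. weight A \<pi> x y *\<^sub>R Z y)
        + \<rho>O *\<^sub>R (\<Sum>y\<in>UNIV. \<alpha> y *\<^sub>R Z y) + \<rho>T *\<^sub>R v1"
    and q: "2 \<le> q" "q < CARD('c)"
    and V_orth: "orthonormal_cols V {1..CARD('c)}"
    and eig: "\<And>x y. \<rho>A * (if x = y then 1 else 0)
          + \<rho>B * weight A \<pi> x y / (sqrt (wdeg A \<pi> x) * sqrt (wdeg A \<pi> y))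
        = (\<Sum>i = 1..CARD('c). V x i * lam i * V y i)"
    and sorted: "\<And>i j. 1 \<le> i \<Longrightarrow> i \<le> j \<Longrightarrow> j \<le> CARD('c) \<Longrightarrow> \<bar>lam j\<bar> \<le> \<bar>lam i\<bar>"
    and gmX: "great_mapping (wdeg A \<pi>) \<gamma>1 \<gamma>2 {Z'} V {2..q} \<sigma>"
    and gmY: "great_mapping (wdeg A \<pi>) \<gamma>1' \<gamma>2' {Z'} V {q+1..CARD('c)} \<sigma>"
    and nz: "lam (q+1) \<noteq> 0"
      "frob {2..q} (ZDU Z (wdeg A \<pi>) V) \<noteq> 0"
      "frob {q+1..CARD('c)} (ZDU Z (wdeg A \<pi>) V) \<noteq> 0"
  shows "frob {2..q} (ZDU (\<sigma> \<circ> Z') (wdeg A \<pi>) V) / frob {2..q} (ZDU Z (wdeg A \<pi>) V)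
     \<ge> \<bar>lam q / lam (q+1)\<bar> * (\<gamma>1 / \<gamma>2')
       * (frob {q+1..CARD('c)} (ZDU (\<sigma> \<circ> Z') (wdeg A \<pi>) V)
          / frob {q+1..CARD('c)} (ZDU Z (wdeg A \<pi>) V))"
proof -
  let ?n = "CARD('c)" and ?d = "wdeg A \<pi>" and ?X = "{2..q}" and ?Y = "{q+1..CARD('c)}"
  interpret connected_weighted_graph "weight A \<pi>"
    using graph stat q by (intro connected_weighted_graph_weight) (auto simp: stationary_dist_def)
  have eigen: "(\<Sum>y\<in>UNIV. propagation_matrix \<rho>A \<rho>B (weight A \<pi>) x y * V y j) = lam j * V x j"
    if "j \<in> {1..?n}" for x j
    using eigenvector_of_spectral_decomposition[OF _ V_orth _ that] eig
    by (simp add: propagation_matrix_def wdeg_eq_graph_degree)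
  obtain K where Z'_split:
      "\<And>x. Z' x = \<rho>A *\<^sub>R Z x + (\<rho>B / deg x) *\<^sub>R (\<Sum>y\<in>UNIV. weight A \<pi> x y *\<^sub>R Z y) + K"
    using Z'_def by (simp add: add.assoc wdeg_eq_graph_degree)
  have ZDU_Z': "ZDU Z' ?d V j = lam j *\<^sub>R ZDU Z ?d V j" if "j \<in> {2..?n}" for j
    unfolding wdeg_eq_graph_degree using that q
    by (intro ZDU_propagation_subdominant[OF rho(1,2) Z'_split V_orth, of 1]) (auto intro: eigen sorted)
  have spectral_X: "\<bar>lam q\<bar> * frob ?X (ZDU Z ?d V) \<le> frob ?X (ZDU Z' ?d V)"
    using q by (intro mult_frob_le_frob) (auto simp: ZDU_Z' intro!: mult_right_mono sorted)
  have spectral_Y: "frob ?Y (ZDU Z' ?d V) \<le> \<bar>lam (q+1)\<bar> * frob ?Y (ZDU Z ?d V)"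
    using q by (intro frob_le_mult_frob) (auto simp: ZDU_Z' intro!: mult_right_mono sorted)
  have great: "\<gamma>1 * frob ?X (ZDU Z' ?d V) \<le> frob ?X (ZDU (\<sigma> \<circ> Z') ?d V)" "0 < \<gamma>1"
    "frob ?Y (ZDU (\<sigma> \<circ> Z') ?d V) \<le> \<gamma>2' * frob ?Y (ZDU Z' ?d V)" "0 < \<gamma>2'"
    using gmX gmY unfolding great_mapping_def by auto
  have "\<gamma>1 * (\<bar>lam q\<bar> * frob ?X (ZDU Z ?d V)) \<le> frob ?X (ZDU (\<sigma> \<circ> Z') ?d V)"
    using spectral_X great(1,2) by (meson less_imp_le mult_left_mono order_trans)
  moreover have "frob ?Y (ZDU (\<sigma> \<circ> Z') ?d V) \<le> \<gamma>2' * (\<bar>lam (q+1)\<bar> * frob ?Y (ZDU Z ?d V))"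
    using spectral_Y great(3,4) by (meson less_imp_le mult_left_mono order_trans)
  ultimately show ?thesis
    unfolding abs_divide using nz great(2,4) frob_nonneg[of _ "ZDU Z ?d V"]
    by (intro ratio_le_of_bounds) (auto simp: order.not_eq_order_implies_strict)
qed

end
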